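(* Let $\ell>0$. For any initial datum $S(0)\in\mathbb R_+$ there exists a unique positive solution $S(t)\in\mathbb R_+$ of the ODE $\frac{d}{dt}S(t)=A_\ell(S(t))$. This solution is bounded with continuous first derivative for all $t\ge0$; moreover $\lim_{t\to\infty}S(t)=1$ and $0\le S(t)\le\max\{S(0),1\}$ for all $t\ge0$.
   Context: $\mathbb R_+=\{x\in\mathbb R:x\ge0\}$. With $\Phi$ the standard normal cdf: for $x>0$, $D_\ell(x)=2\ell^2e^{\ell^2(x-1)}\Phi\big(\tfrac{\ell(1-2x)}{\sqrt{2x}}\big)$, $\Gamma_\ell(x)=D_\ell(x)+2\ell^2\Phi\big(-\tfrac{\ell}{\sqrt{2x}}\big)$, $A_\ell(x)=-2xD_\ell(x)+\Gamma_\ell(x)$; and $D_\ell(0)=\Gamma_\ell(0)=A_\ell(0)=2\ell^2e^{-\ell^2}$. *)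

theory Defs
  imports "HOL-Probability.Probability"
begin

definition Phi :: "real \<Rightarrow> real" where
  "Phi x = (LBINT t:{..x}. std_normal_density t)"

definition D_l :: "real \<Rightarrow> real \<Rightarrow> real" where
  "D_l l x = (if x = 0 then 2 * l\<^sup>2 * exp (- l\<^sup>2)
     else 2 * l\<^sup>2 * exp (l\<^sup>2 * (x - 1)) * Phi (l * (1 - 2 * x) / sqrt (2 * x)))"

definition Gamma_l :: "real \<Rightarrow> real \<Rightarrow> real" where
  "Gamma_l l x = (if x = 0 then 2 * l\<^sup>2 * exp (- l\<^sup>2)
     else D_l l x + 2 * l\<^sup>2 * Phi (- l / sqrt (2 * x)))"

definition A_l :: "real \<Rightarrow> real \<Rightarrow> real" where
  "A_l l x = (if x = 0 then 2 * l\<^sup>2 * exp (- l\<^sup>2)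
     else - 2 * x * D_l l x + Gamma_l l x)"

definition is_pos_solution :: "real \<Rightarrow> real \<Rightarrow> (real \<Rightarrow> real) \<Rightarrow> bool" where
  "is_pos_solution l S0 S \<longleftrightarrow> S 0 = S0 \<and>
     (\<forall>t\<ge>0. S t \<ge> 0 \<and> (S has_real_derivative A_l l (S t)) (at t within {0..}))"

end

theory Submission
  imports Defs "HOL-Real_Asymp.Real_Asymp"
begin

text \<open>
  Write \<open>A_l(x) = 2 l\<^sup>2 F(x, l)\<close>. Differentiating \<open>F(x, l)\<close> in \<open>l\<close> gives
  \<open>2 (x - 1) e\<^bsup>l\<^sup>2(x-1)\<^esup> \<surd>(2x) \<psi>(l(1-2x)/\<surd>(2x))\<close> with \<open>\<psi>(z) = z \<Phi>(z) + \<phi>(z) > 0\<close>, and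
  \<open>F x l \<rightarrow> 0\<close> as \<open>l \<rightarrow> \<infinity>\<close>; hence \<open>A_l\<close> is positive on \<open>[0,1)\<close>, vanishes at 1 and is negative
  on \<open>(1,\<infinity>)\<close>. It is continuous and differentiable at 1, so \<open>|A_l y| \<le> L |y - 1|\<close> near 1.
  For a scalar equation \<open>u' = c(u)\<close> with \<open>c > 0\<close> below 1 and such a bound, the passage time
  \<open>T(s) = \<integral>\<^sub>m\<^sup>s 1/c\<close> is a diffeomorphism onto \<open>(0,\<infinity>)\<close>; its inverse gives the solution, \<open>T(u(t)) - t\<close>
  is constant along every solution (uniqueness), and \<open>T \<rightarrow> \<infinity>\<close> at 1 so the level 1 is neither
  reached nor left in finite time. Data above 1 are handled by the reflection \<open>u \<mapsto> 2 - u\<close>.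
\<close>

section \<open>The standard normal distribution\<close>

abbreviation "phi \<equiv> std_normal_density"

lemma std_normal_density_has_real_derivative: "(phi has_real_derivative (- x * phi x)) (at x)"
proof -
  have "((\<lambda>x. exp (- x\<^sup>2 / 2)) has_real_derivative exp (- x\<^sup>2 / 2) * (- x)) (at x)"
    by (auto intro!: derivative_eq_intros simp: power2_eq_square)
  from DERIV_cmult[OF this, of "1 / sqrt (2 * pi)"] show ?thesis
    by (simp add: std_normal_density_def[abs_def] mult_ac)
qed

lemma std_normal_density_minus: "phi (- x) = phi x"
  by (simp add: std_normal_density_def)

lemma std_normal_density_le_1: "phi x \<le> 1"
proof -
  have "1 / sqrt (2 * pi) \<le> 1" using pi_gt3 by (simp add: divide_simps real_le_rsqrt)
  moreover have "exp (- x\<^sup>2 / 2) \<le> 1" by simp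
  ultimately show ?thesis
    unfolding std_normal_density_def by (intro mult_le_one) auto
qed

lemma std_normal_density_at_top: "(phi \<longlongrightarrow> 0) at_top"
  unfolding std_normal_density_def by real_asymp

lemma set_integrable_std_normal_density: "A \<in> sets borel \<Longrightarrow> set_integrable lborel A phi"
  unfolding set_integrable_def by (intro integrable_mult_indicator) auto

lemma Phi_eq_plus_interval_integral: "Phi u = Phi c + (LBINT t=c..u. phi t)"
proof -
  have split: "Phi b = Phi a + (LBINT t=a..b. phi t)" if "a \<le> b" for a b
  proof -
    have "{..b} = {..a} \<union> {a<..b}" using that by auto
    then have "Phi b = (LBINT t:{..a}. phi t) + (LBINT t:{a<..b}. phi t)"
      unfolding Phi_def
      by (simp only:) (rule set_integral_Un; auto intro!: set_integrable_std_normal_density)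
    thus ?thesis using interval_integral_Ioc[OF that, of phi] unfolding Phi_def by simp
  qed
  show ?thesis
    using split[of c u] split[of u c] interval_integral_endpoints_reverse[of u c phi]
    by (cases "c \<le> u") auto
qed

lemma Phi_has_real_derivative: "(Phi has_real_derivative phi x) (at x)"
proof -
  have "((\<lambda>u. LBINT y=x..u. phi y) has_vector_derivative phi x) (at x within {x-1..x+1})"
    by (rule interval_integral_FTC2) (auto intro!: continuous_intros simp: std_normal_density_def)
  hence "((\<lambda>u. Phi x + (LBINT y=x..u. phi y)) has_real_derivative phi x) (at x)"
    by (auto intro!: derivative_eq_intros
        simp: has_real_derivative_iff_has_vector_derivative at_within_Icc_at)
  moreover have "(\<lambda>u. Phi x + (LBINT y=x..u. phi y)) = Phi"
    using Phi_eq_plus_interval_integral[of _ x] by (intro ext) (rule sym)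
  ultimately show ?thesis by simp
qed

lemma DERIV_Phi_comp [derivative_intros]:
  "(g has_real_derivative g') (at x within s) \<Longrightarrow>
   ((\<lambda>x. Phi (g x)) has_real_derivative phi (g x) * g') (at x within s)"
  using DERIV_chain2[OF Phi_has_real_derivative] by (simp add: mult.commute)

lemma continuous_on_Phi_comp [continuous_intros]:
  "continuous_on S g \<Longrightarrow> continuous_on S (\<lambda>x. Phi (g x))"
  using continuous_on_compose2[of UNIV Phi S g] DERIV_isCont[OF Phi_has_real_derivative]
  by (simp add: continuous_at_imp_continuous_on)

lemma Phi_at_top: "(Phi \<longlongrightarrow> 1) at_top"
proof -
  have "((\<lambda>y. \<integral>x. indicator {..y} x *\<^sub>R phi x \<partial>lborel) \<longlongrightarrow> \<integral>x. phi x \<partial>lborel) at_top"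
    by (rule tendsto_integral_at_top) auto
  thus ?thesis unfolding Phi_def set_lebesgue_integral_def by simp
qed

lemma Phi_at_bot: "(Phi \<longlongrightarrow> 0) at_bot"
proof -
  define s where "s t x = indicator {..-t} x *\<^sub>R phi x" for t x :: real
  have "AE x in lborel. ((\<lambda>t. s t x) \<longlongrightarrow> 0) at_top"
  proof (intro AE_I2 tendsto_eventually)
    fix x :: real
    show "\<forall>\<^sub>F t in at_top. s t x = 0"
      using eventually_gt_at_top[of "-x"] by eventually_elim (auto simp: s_def indicator_def)
  qed
  moreover have "\<forall>\<^sub>F t in at_top. AE x in lborel. norm (s t x) \<le> phi x"
    by (intro always_eventually allI AE_I2) (auto simp: s_def indicator_def)
  ultimately have "((\<lambda>t. integral\<^sup>L lborel (s t)) \<longlongrightarrow> integral\<^sup>L lborel (\<lambda>x::real. 0::real)) at_top"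
    by (intro integral_dominated_convergence_at_top[where w = phi]) (auto simp: s_def[abs_def])
  hence "((\<lambda>t. Phi (-t)) \<longlongrightarrow> 0) at_top"
    unfolding Phi_def set_lebesgue_integral_def s_def by simp
  thus ?thesis by (simp add: filterlim_at_bot_mirror)
qed

lemma Phi_strict_mono: "x < y \<Longrightarrow> Phi x < Phi y"
  by (rule DERIV_pos_imp_increasing)
     (auto intro!: exI Phi_has_real_derivative normal_density_pos)

lemma Phi_nonneg: "0 \<le> Phi x"
  by (rule tendsto_upperbound[OF Phi_at_bot])
     (auto intro!: eventually_mono[OF eventually_le_at_bot[of x]] simp: less_eq_real_def Phi_strict_mono)

lemma Phi_le_1: "Phi x \<le> 1"
  by (rule tendsto_lowerbound[OF Phi_at_top])
     (auto intro!: eventually_mono[OF eventually_ge_at_top[of x]] simp: less_eq_real_def Phi_strict_mono)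

text \<open>Mills' ratio bound: \<open>\<phi>(y)/y - \<Phi>(-y)\<close> decreases to 0.\<close>

lemma Phi_minus_le_Mills: assumes "0 < y" shows "Phi (- y) \<le> phi y / y"
proof -
  define h where "h y = phi y / y - Phi (- y)" for y
  have h_decreasing: "h b < h a" if "0 < a" "a < b" for a b
  proof (rule DERIV_neg_imp_decreasing[OF that(2)])
    fix x assume "a \<le> x" "x \<le> b"
    hence x: "0 < x" using that by auto
    have "(h has_real_derivative ((- x * phi x) * x - phi x) / x\<^sup>2 - phi (- x) * (- 1)) (at x)"
      unfolding h_def using x
      by (auto intro!: derivative_eq_intros std_normal_density_has_real_derivative
          simp: power2_eq_square)
    moreover have "((- x * phi x) * x - phi x) / x\<^sup>2 - phi (- x) * (- 1) = - phi x / x\<^sup>2"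
      using x by (simp add: std_normal_density_minus field_simps power2_eq_square)
    moreover have "- phi x / x\<^sup>2 < 0" using normal_density_pos[of 1 0 x] x by simp
    ultimately show "\<exists>d. (h has_real_derivative d) (at x) \<and> d < 0" by auto
  qed
  have "((\<lambda>y. phi y / y) \<longlongrightarrow> 0) at_top"
    unfolding std_normal_density_def by real_asymp
  hence "(h \<longlongrightarrow> 0) at_top"
    unfolding h_def using tendsto_diff[OF _ Phi_at_bot[unfolded filterlim_at_bot_mirror]] by fastforce
  hence "0 \<le> h y"
    by (rule tendsto_upperbound)
       (auto intro!: eventually_mono[OF eventually_ge_at_top[of y]]
         simp: less_eq_real_def h_decreasing assms)
  thus ?thesis by (simp add: h_def)
qed

text \<open>The primitive \<open>\<integral>\<^sub>-\<^sub>\<infinity>\<^sup>z \<Phi>\<close> of the normal distribution function.\<close>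

definition Phi_primitive :: "real \<Rightarrow> real" where
  "Phi_primitive z = z * Phi z + phi z"

lemma Phi_primitive_pos: "0 < Phi_primitive z"
proof -
  have increasing: "Phi_primitive a < Phi_primitive b" if "a < b" for a b
    using that
  proof (rule DERIV_pos_imp_increasing)
    fix x
    have "(Phi_primitive has_real_derivative Phi x * 1 + x * phi x + (- x * phi x)) (at x)"
      unfolding Phi_primitive_def[abs_def]
      by (auto intro!: derivative_eq_intros std_normal_density_has_real_derivative)
    moreover have "0 < Phi x" using Phi_nonneg[of "x - 1"] Phi_strict_mono[of "x - 1" x] by simp
    ultimately show "\<exists>d. (Phi_primitive has_real_derivative d) (at x) \<and> 0 < d" by force
  qed
  have "((\<lambda>y. y * Phi (- y)) \<longlongrightarrow> 0) at_top"
  proof (rule tendsto_sandwich[OF _ _ tendsto_const std_normal_density_at_top])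
    show "\<forall>\<^sub>F y in at_top. 0 \<le> y * Phi (- y)"
      using eventually_ge_at_top[of 0] by eventually_elim (simp add: Phi_nonneg)
    show "\<forall>\<^sub>F y in at_top. y * Phi (- y) \<le> phi y"
      using eventually_gt_at_top[of 0]
      by eventually_elim (use Phi_minus_le_Mills in \<open>simp add: field_simps\<close>)
  qed
  hence "((\<lambda>y. - (y * Phi (- y)) + phi y) \<longlongrightarrow> - 0 + 0) at_top"
    by (intro tendsto_intros std_normal_density_at_top)
  hence "(Phi_primitive \<longlongrightarrow> 0) at_bot"
    by (simp add: filterlim_at_bot_mirror Phi_primitive_def std_normal_density_minus)
  hence "0 \<le> Phi_primitive (z - 1)"
    by (rule tendsto_upperbound)
       (auto intro!: eventually_mono[OF eventually_le_at_bot[of "z - 1"]]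
         simp: less_eq_real_def increasing)
  thus ?thesis using increasing[of "z - 1" z] by simp
qed

section \<open>Sign of the drift \<open>A_l\<close>\<close>

definition drift_factor :: "real \<Rightarrow> real \<Rightarrow> real" where
  "drift_factor x l = (1 - 2*x) * exp (l\<^sup>2 * (x - 1)) * Phi (l * (1 - 2*x) / sqrt (2*x))
     + Phi (- l / sqrt (2*x))"

lemma A_l_eq_drift_factor: "0 < x \<Longrightarrow> A_l l x = 2 * l\<^sup>2 * drift_factor x l"
  unfolding A_l_def Gamma_l_def D_l_def drift_factor_def by (simp add: algebra_simps)

lemma A_l_1: "A_l l 1 = 0"
  by (simp add: A_l_eq_drift_factor drift_factor_def)

text \<open>This cancellation reduces the \<open>l\<close>-derivative of the drift factor to a single \<open>\<Phi>_primitive\<close> term.\<close>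

lemma exp_mult_std_normal_density:
  assumes "0 < x"
  shows "exp (l\<^sup>2 * (x - 1)) * phi (l * (1 - 2*x) / sqrt (2*x)) = phi (- l / sqrt (2*x))"
proof -
  have s2: "(sqrt (2*x))\<^sup>2 = 2*x" using assms by simp
  have "l\<^sup>2 * (x - 1) - (l * (1 - 2*x) / sqrt (2*x))\<^sup>2 / 2 = - (- l / sqrt (2*x))\<^sup>2 / 2"
    using assms by (simp add: power_divide power_mult_distrib s2 field_simps power2_eq_square)
  thus ?thesis unfolding std_normal_density_def
    by (simp add: mult.left_commute exp_add[symmetric])
qed

lemma drift_factor_has_real_derivative:
  assumes x: "0 < x"
  shows "(drift_factor x has_real_derivative
     2 * (x - 1) * exp (l\<^sup>2 * (x - 1)) * sqrt (2*x) * Phi_primitive (l * (1 - 2*x) / sqrt (2*x))) (at l)"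
proof -
  define s where "s = sqrt (2*x)"
  have s: "0 < s" "x = s * s / 2" using x by (auto simp: s_def)
  define a where "a = (1 - 2*x) / s"
  define b where "b = - 1 / s"
  define E where "E = exp (l\<^sup>2 * (x - 1))"
  have "drift_factor x = (\<lambda>l. (1 - 2*x) * exp (l\<^sup>2 * (x - 1)) * Phi (a * l) + Phi (b * l))"
    by (auto simp: drift_factor_def a_def b_def s_def ac_simps)
  moreover have "((\<lambda>l. (1 - 2*x) * exp (l\<^sup>2 * (x - 1)) * Phi (a * l) + Phi (b * l))
      has_real_derivative (1 - 2*x) * (E * (2 * l * (x - 1)) * Phi (a * l) + E * (phi (a * l) * a))
        + phi (b * l) * b) (at l)"
    unfolding E_def by (auto intro!: derivative_eq_intros simp: power2_eq_square algebra_simps)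
  moreover have "phi (b * l) = E * phi (a * l)"
    using exp_mult_std_normal_density[OF x, of l] by (simp add: E_def a_def b_def s_def ac_simps)
  moreover have "(1 - 2*x) * (E * (2 * l * (x - 1)) * Phi (a * l) + E * (phi (a * l) * a))
      + E * phi (a * l) * b = 2 * (x - 1) * E * s * Phi_primitive (a * l)"
    unfolding Phi_primitive_def a_def b_def using s by (simp add: field_simps)
  ultimately show ?thesis by (simp add: E_def s_def a_def mult.commute)
qed

lemma drift_factor_main_term_at_top_lt_1:
  assumes "x < 1"
  shows "((\<lambda>l. (1 - 2*x) * exp (l\<^sup>2 * (x - 1)) * Phi (l * (1 - 2*x) / sqrt (2*x))) \<longlongrightarrow> 0) at_top"
proof -
  have "filterlim (\<lambda>l::real. l\<^sup>2) at_top at_top" by real_asymp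
  hence "filterlim (\<lambda>l. (x - 1) * l\<^sup>2) at_bot at_top"
    using assms by (intro filterlim_tendsto_neg_mult_at_bot[OF tendsto_const]) auto
  hence "((\<lambda>l. exp ((x - 1) * l\<^sup>2)) \<longlongrightarrow> 0) at_top"
    by (rule filterlim_compose[OF exp_at_bot])
  hence "((\<lambda>l. \<bar>1 - 2*x\<bar> * exp (l\<^sup>2 * (x - 1))) \<longlongrightarrow> 0) at_top"
    by (intro tendsto_mult_right_zero) (simp add: mult.commute)
  moreover have "\<forall>\<^sub>F l in at_top.
      norm ((1 - 2*x) * exp (l\<^sup>2 * (x - 1)) * Phi (l * (1 - 2*x) / sqrt (2*x)))
      \<le> \<bar>1 - 2*x\<bar> * exp (l\<^sup>2 * (x - 1))"
  proof (intro always_eventually allI)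
    fix l
    have "norm ((1 - 2*x) * exp (l\<^sup>2 * (x - 1)) * Phi (l * (1 - 2*x) / sqrt (2*x)))
        = \<bar>1 - 2*x\<bar> * exp (l\<^sup>2 * (x - 1)) * Phi (l * (1 - 2*x) / sqrt (2*x))"
      by (simp add: abs_mult Phi_nonneg)
    also have "\<dots> \<le> \<bar>1 - 2*x\<bar> * exp (l\<^sup>2 * (x - 1)) * 1"
      by (intro mult_left_mono Phi_le_1) auto
    finally show "norm ((1 - 2*x) * exp (l\<^sup>2 * (x - 1)) * Phi (l * (1 - 2*x) / sqrt (2*x)))
        \<le> \<bar>1 - 2*x\<bar> * exp (l\<^sup>2 * (x - 1))" by simp
  qed
  ultimately show ?thesis by (rule Lim_null_comparison[rotated])
qed

text \<open>For \<open>x > 1\<close> the exponential blows up, but Mills' bound turns the product into \<open>\<phi>(-l/\<surd>(2x))\<close>.\<close>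

lemma drift_factor_main_term_at_top_gt_1:
  assumes "1 < x"
  shows "((\<lambda>l. (1 - 2*x) * exp (l\<^sup>2 * (x - 1)) * Phi (l * (1 - 2*x) / sqrt (2*x))) \<longlongrightarrow> 0) at_top"
proof -
  define s where "s = sqrt (2 * x)"
  have s: "0 < s" "s * s = 2 * x" using assms by (auto simp: s_def)
  have "((\<lambda>l. s / l) \<longlongrightarrow> 0) at_top"
    by (intro tendsto_divide_0[OF tendsto_const] filterlim_at_top_imp_at_infinity filterlim_ident)
  moreover have "\<forall>\<^sub>F l in at_top. norm ((1 - 2*x) * exp (l\<^sup>2 * (x - 1)) * Phi (l * (1 - 2*x) / s)) \<le> s / l"
    using eventually_gt_at_top[of 0]
  proof eventually_elim
    case (elim l)
    define y where "y = l * (2 * x - 1) / s"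
    have y: "0 < y" "l * (1 - 2 * x) / s = - y"
      using elim assms s by (auto simp: y_def field_simps)
    have e: "exp (l\<^sup>2 * (x - 1)) * phi y = phi (- l / s)"
      using exp_mult_std_normal_density[of x l] assms
      by (simp only: s_def[symmetric] y(2) std_normal_density_minus)
    have "norm ((1 - 2*x) * exp (l\<^sup>2 * (x - 1)) * Phi (l * (1 - 2*x) / s))
        = (2 * x - 1) * (exp (l\<^sup>2 * (x - 1)) * Phi (- y))"
      using assms by (simp add: y abs_mult Phi_nonneg)
    also have "\<dots> \<le> (2 * x - 1) * (exp (l\<^sup>2 * (x - 1)) * (phi y / y))"
      using assms by (intro mult_left_mono Phi_minus_le_Mills y) auto
    also have "\<dots> = (2 * x - 1) * (phi (- l / s) / y)"
      unfolding e[symmetric] by simp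
    also have "\<dots> \<le> (2 * x - 1) * (1 / y)"
      using assms y by (intro mult_left_mono divide_right_mono std_normal_density_le_1) auto
    also have "\<dots> = s / l" using assms elim s by (simp add: y_def field_simps)
    finally show ?case .
  qed
  ultimately show ?thesis unfolding s_def by (rule Lim_null_comparison[rotated])
qed

lemma drift_factor_at_top: assumes "0 < x" "x \<noteq> 1" shows "(drift_factor x \<longlongrightarrow> 0) at_top"
proof -
  have "filterlim (\<lambda>l. (- 1 / sqrt (2 * x)) * l) at_bot at_top"
    using assms by (intro filterlim_tendsto_neg_mult_at_bot[OF tendsto_const _ filterlim_ident]) auto
  from filterlim_compose[OF Phi_at_bot this]
  have tail: "((\<lambda>l. Phi (- l / sqrt (2 * x))) \<longlongrightarrow> 0) at_top" by simp
  have main: "((\<lambda>l. (1 - 2*x) * exp (l\<^sup>2 * (x - 1)) * Phi (l * (1 - 2*x) / sqrt (2*x))) \<longlongrightarrow> 0) at_top"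
    using assms drift_factor_main_term_at_top_lt_1 drift_factor_main_term_at_top_gt_1
    by (cases "x < 1") auto
  from tendsto_add[OF main tail] show ?thesis by (simp add: drift_factor_def[abs_def])
qed

lemma drift_factor_pos: assumes x: "0 < x" "x < 1" shows "0 < drift_factor x l"
proof -
  have decreasing: "drift_factor x b < drift_factor x a" if "a < b" for a b
  proof (rule DERIV_neg_imp_decreasing[OF that])
    fix t
    show "\<exists>y. (drift_factor x has_real_derivative y) (at t) \<and> y < 0"
      using drift_factor_has_real_derivative[OF x(1), of t] x Phi_primitive_pos
      by (auto intro!: exI simp: mult_less_0_iff zero_less_mult_iff)
  qed
  have "0 \<le> drift_factor x (l + 1)"
    by (rule tendsto_upperbound[OF drift_factor_at_top[of x]])
       (use x in \<open>auto intro!: eventually_mono[OF eventually_ge_at_top[of "l+1"]]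
         simp: less_eq_real_def decreasing\<close>)
  thus ?thesis using decreasing[of l "l+1"] by simp
qed

lemma drift_factor_neg: assumes x: "1 < x" shows "drift_factor x l < 0"
proof -
  have increasing: "drift_factor x a < drift_factor x b" if "a < b" for a b
  proof (rule DERIV_pos_imp_increasing[OF that])
    fix t
    show "\<exists>y. (drift_factor x has_real_derivative y) (at t) \<and> 0 < y"
      using drift_factor_has_real_derivative[of x t] x Phi_primitive_pos
      by (auto intro!: exI mult_pos_pos)
  qed
  have "drift_factor x (l + 1) \<le> 0"
    by (rule tendsto_lowerbound[OF drift_factor_at_top[of x]])
       (use x in \<open>auto intro!: eventually_mono[OF eventually_ge_at_top[of "l+1"]]
         simp: less_eq_real_def increasing\<close>)
  thus ?thesis using increasing[of l "l+1"] by simp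
qed

lemma A_l_pos: assumes "0 < l" "0 \<le> x" "x < 1" shows "0 < A_l l x"
  using assms drift_factor_pos[of x l]
  by (cases "x = 0") (simp_all add: A_l_def[of l 0] A_l_eq_drift_factor)

lemma A_l_neg: assumes "0 < l" "1 < x" shows "A_l l x < 0"
  using assms drift_factor_neg[of x l] by (simp add: A_l_eq_drift_factor mult_pos_neg)

lemma A_l_at_right_0:
  assumes "0 < l"
  shows "(A_l l \<longlongrightarrow> A_l l 0) (at_right 0)"
proof -
  have "((\<lambda>x. sqrt (2 * x)) \<longlongrightarrow> 0) (at_right (0::real))" by real_asymp
  moreover have "eventually (\<lambda>x. 0 < sqrt (2 * x)) (at_right (0::real))"
    using eventually_at_right_less[of "0::real"] by eventually_elim simp
  ultimately have inv: "filterlim (\<lambda>x. inverse (sqrt (2 * x))) at_top (at_right (0::real))"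
    by (rule filterlim_inverse_at_top)
  have "filterlim (\<lambda>x. l * (1 - 2 * x) * inverse (sqrt (2 * x))) at_top (at_right 0)"
    using assms by (intro filterlim_tendsto_pos_mult_at_top[OF _ _ inv] tendsto_eq_intros) auto
  from filterlim_compose[OF Phi_at_top this]
  have "((\<lambda>x. Phi (l * (1 - 2 * x) * inverse (sqrt (2 * x)))) \<longlongrightarrow> 1) (at_right 0)" .
  moreover have "filterlim (\<lambda>x. (- l) * inverse (sqrt (2 * x))) at_bot (at_right 0)"
    using assms by (intro filterlim_tendsto_neg_mult_at_bot[OF tendsto_const _ inv]) auto
  from filterlim_compose[OF Phi_at_bot this]
  have "((\<lambda>x. Phi ((- l) * inverse (sqrt (2 * x)))) \<longlongrightarrow> 0) (at_right 0)" .
  ultimately have "((\<lambda>x. 2 * l\<^sup>2 * drift_factor x l) \<longlongrightarrow>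
      2 * l\<^sup>2 * ((1 - 2 * 0) * exp (l\<^sup>2 * (0 - 1)) * 1 + 0)) (at_right 0)"
    unfolding drift_factor_def divide_inverse by (intro tendsto_intros)
  moreover have "eventually (\<lambda>x. 2 * l\<^sup>2 * drift_factor x l = A_l l x) (at_right (0::real))"
    using eventually_at_right_less[of "0::real"] by eventually_elim (simp add: A_l_eq_drift_factor)
  ultimately show ?thesis by (simp add: A_l_def Lim_transform_eventually)
qed

lemma continuous_on_A_l: assumes "0 < l" shows "continuous_on {0..} (A_l l)"
proof -
  have "continuous_on {0<..} (\<lambda>x. 2 * l\<^sup>2 * drift_factor x l)"
    unfolding drift_factor_def by (intro continuous_intros) auto
  hence "continuous_on {0<..} (A_l l)"
    by (rule continuous_on_cong[THEN iffD1, rotated 2]) (auto simp: A_l_eq_drift_factor)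
  hence at_pos: "isCont (A_l l) x" if "0 < x" for x
    using that by (simp add: continuous_on_eq_continuous_at)
  have "{0::real..} - {0} = {0<..}" by auto
  hence "at (0::real) within {0..} = at_right 0" by (simp add: at_within_def)
  show ?thesis unfolding continuous_on_eq_continuous_within
  proof
    fix x :: real assume "x \<in> {0..}"
    show "continuous (at x within {0..}) (A_l l)"
    proof (cases "x = 0")
      case True
      with A_l_at_right_0[OF assms] \<open>at 0 within {0..} = at_right 0\<close> show ?thesis
        by (simp add: continuous_within)
    next
      case False
      with \<open>x \<in> {0..}\<close> at_pos[of x] show ?thesis
        by (simp add: continuous_at_imp_continuous_at_within)
    qed
  qed
qed

lemma A_l_linear_bound_at_1: "\<exists>L>0. eventually (\<lambda>y. \<bar>A_l l y\<bar> \<le> L * \<bar>y - 1\<bar>) (at 1)"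
proof -
  define f where "f y = 2 * l\<^sup>2 * drift_factor y l" for y
  have "\<exists>D. (f has_real_derivative D) (at 1)"
    unfolding f_def[abs_def] drift_factor_def by (rule exI) (rule derivative_eq_intros refl | simp)+
  then obtain D where "(f has_real_derivative D) (at 1)" by blast
  moreover have "f 1 = 0" by (simp add: f_def drift_factor_def)
  ultimately have "((\<lambda>y. f y / (y - 1)) \<longlongrightarrow> D) (at 1)"
    by (simp add: has_field_derivative_iff)
  hence "((\<lambda>y. \<bar>f y / (y - 1)\<bar>) \<longlongrightarrow> \<bar>D\<bar>) (at 1)" by (rule tendsto_rabs)
  hence "eventually (\<lambda>y. \<bar>f y / (y - 1)\<bar> < \<bar>D\<bar> + 1) (at 1)" by (rule order_tendstoD) simp
  moreover have "eventually (\<lambda>y. 0 < y) (at (1::real))"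
    by (rule order_tendstoD[OF tendsto_ident_at]) simp
  moreover have "eventually (\<lambda>y. y \<noteq> 1) (at (1::real))" by (simp add: eventually_at_filter)
  ultimately have "eventually (\<lambda>y. \<bar>A_l l y\<bar> \<le> (\<bar>D\<bar> + 1) * \<bar>y - 1\<bar>) (at 1)"
    by eventually_elim (auto simp: f_def A_l_eq_drift_factor abs_divide divide_less_eq less_imp_le)
  thus ?thesis by (intro exI[of _ "\<bar>D\<bar> + 1"]) auto
qed


section \<open>A scalar autonomous equation below an equilibrium\<close>

lemma continuous_on_compact_strict_lower_bound:
  fixes u :: "'a::topological_space \<Rightarrow> real"
  assumes "compact S" "continuous_on S u"
  shows "\<exists>m. \<forall>t\<in>S. m < u t"
proof -
  obtain a where "\<forall>x\<in>u ` S. \<bar>x\<bar> \<le> a"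
    using compact_continuous_image[OF assms(2,1), THEN compact_imp_bounded] bounded_real by blast
  thus ?thesis by (intro exI[of _ "- a - 1"]) force
qed

lemma compact_Icc_superlevel_set:
  fixes u :: "real \<Rightarrow> real"
  assumes "continuous_on {p..q} u"
  shows "compact {t\<in>{p..q}. a \<le> u t}"
proof -
  have "{t\<in>{p..q}. a \<le> u t} = {p..q} \<inter> u -` {a..}" by auto
  moreover have "closed ({p..q} \<inter> u -` {a..})"
    by (intro continuous_closed_preimage assms) auto
  moreover have "bounded ({p..q} \<inter> u -` {a..})"
    by (rule bounded_subset[OF bounded_closed_interval]) auto
  ultimately show ?thesis by (simp add: compact_eq_bounded_closed)
qed

locale below_equilibrium =
  fixes c :: "real \<Rightarrow> real"
  assumes continuous_on_c: "continuous_on {..<1} c"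
    and c_pos: "y < 1 \<Longrightarrow> 0 < c y"
    and c_linear_bound: "\<exists>L>0. eventually (\<lambda>y. c y \<le> L * (1 - y)) (at_left 1)"
begin

text \<open>The time a solution of \<open>u' = c(u)\<close> needs to travel from \<open>m\<close> to \<open>s\<close>.\<close>

definition passage_time :: "real \<Rightarrow> real \<Rightarrow> real" where
  "passage_time m s = integral {m..s} (\<lambda>y. 1 / c y)"

lemma continuous_on_inverse_c:
  assumes "b < 1" shows "continuous_on {m..b} (\<lambda>y. 1 / c y)"
proof (rule continuous_on_divide[OF continuous_on_const])
  show "continuous_on {m..b} c" using assms by (auto intro: continuous_on_subset[OF continuous_on_c])
  show "\<forall>y\<in>{m..b}. c y \<noteq> 0"
  proof
    fix y assume "y \<in> {m..b}"
    with assms c_pos[of y] show "c y \<noteq> 0" by auto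
  qed
qed

lemma continuous_on_passage_time: "b < 1 \<Longrightarrow> continuous_on {m..b} (passage_time m)"
  unfolding passage_time_def[abs_def]
  by (intro indefinite_integral_continuous_1 integrable_continuous_interval continuous_on_inverse_c)

lemma passage_time_has_real_derivative:
  assumes "m < s" "s < 1"
  shows "(passage_time m has_real_derivative 1 / c s) (at s)"
proof -
  have "(passage_time m has_vector_derivative 1 / c s) (at s within {m..(s+1)/2})"
    unfolding passage_time_def[abs_def] using assms
    by (intro integral_has_vector_derivative continuous_on_inverse_c) auto
  moreover have "at s within {m..(s+1)/2} = at s" using assms by (intro at_within_Icc_at) auto
  ultimately show ?thesis by (simp add: has_real_derivative_iff_has_vector_derivative)
qed

lemma strict_mono_on_passage_time: "strict_mono_on {m..<1} (passage_time m)"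
proof (rule strict_mono_onI)
  fix u v assume u: "u \<in> {m..<1}" and v: "v \<in> {m..<1}" and "u < v"
  show "passage_time m u < passage_time m v"
  proof (rule DERIV_pos_imp_increasing_open[OF \<open>u < v\<close>])
    fix x assume "u < x" "x < v"
    with u v have "m < x" "x < 1" by auto
    thus "\<exists>y. (passage_time m has_real_derivative y) (at x) \<and> 0 < y"
      using passage_time_has_real_derivative[of m x] c_pos[of x] by auto
  next
    show "continuous_on {u..v} (passage_time m)"
      using u v by (auto intro: continuous_on_subset[OF continuous_on_passage_time[of v m]])
  qed
qed

lemma passage_time_pos: assumes "m < s" "s < 1" shows "0 < passage_time m s"
proof -
  have "passage_time m m < passage_time m s"
    using assms by (intro strict_mono_onD[OF strict_mono_on_passage_time]) auto
  thus ?thesis by (simp add: passage_time_def)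
qed

text \<open>Near 1, \<open>1/c\<close> dominates \<open>1/(L(1-y))\<close>, whose integral \<open>-ln(1-y)/L\<close> diverges.\<close>

lemma passage_time_at_left_1: "m < 1 \<Longrightarrow> filterlim (passage_time m) at_top (at_left 1)"
proof -
  assume "m < 1"
  obtain L where L: "0 < L" "eventually (\<lambda>y. c y \<le> L * (1 - y)) (at_left 1)"
    using c_linear_bound by blast
  then obtain b where "b < 1" and b: "\<And>y. b < y \<Longrightarrow> y < 1 \<Longrightarrow> c y \<le> L * (1 - y)"
    by (auto simp: eventually_at_left_field)
  define s1 where "s1 = max b ((m + 1) / 2)"
  have s1: "m < s1" "s1 < 1" using \<open>m < 1\<close> \<open>b < 1\<close> by (auto simp: s1_def less_max_iff_disj)
  define h where "h s = passage_time m s + ln (1 - s) / L" for s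
  have h_mono: "h s1 \<le> h s" if "s1 \<le> s" "s < 1" for s
  proof (rule DERIV_nonneg_imp_increasing_open[OF that(1)])
    fix x assume x: "s1 < x" "x < s"
    have "(h has_real_derivative 1 / c x + (- 1 / (1 - x)) / L) (at x)"
      unfolding h_def[abs_def] using x s1 that \<open>0 < L\<close>
      by (auto intro!: derivative_eq_intros passage_time_has_real_derivative)
    moreover have "1 / (L * (1 - x)) \<le> 1 / c x"
      using x s1 that b[of x] c_pos[of x] by (intro divide_left_mono) (auto simp: s1_def)
    ultimately show "\<exists>y. (h has_real_derivative y) (at x) \<and> 0 \<le> y"
      by (intro exI[of _ "1 / c x + (- 1 / (1 - x)) / L"]) (auto simp: field_simps)
  next
    show "continuous_on {s1..s} h" unfolding h_def using that s1 \<open>0 < L\<close>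
      by (intro continuous_intros continuous_on_subset[OF continuous_on_passage_time[of s m]]) auto
  qed
  show ?thesis unfolding filterlim_at_top
  proof
    fix Z
    have "eventually (\<lambda>x. x \<in> {max s1 (1 - exp (L * (h s1 - Z)))<..<1}) (at_left (1::real))"
      using s1 by (intro eventually_at_left_real) auto
    then show "eventually (\<lambda>x. Z \<le> passage_time m x) (at_left 1)"
    proof eventually_elim
      case (elim x)
      hence x: "s1 < x" "x < 1" "1 - x < exp (L * (h s1 - Z))" by auto
      hence "ln (1 - x) < ln (exp (L * (h s1 - Z)))" by (subst ln_less_cancel_iff) auto
      hence "ln (1 - x) < L * (h s1 - Z)" by simp
      hence "ln (1 - x) / L < h s1 - Z" using \<open>0 < L\<close> by (simp add: divide_less_eq mult.commute)
      thus ?case using h_mono[of x] x by (simp add: h_def)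
    qed
  qed
qed


lemma passage_time_image: assumes "m < 1" shows "passage_time m ` {m<..<1} = {0<..}"
proof
  show "passage_time m ` {m<..<1} \<subseteq> {0<..}" using passage_time_pos by auto
  show "{0<..} \<subseteq> passage_time m ` {m<..<1}"
  proof
    fix y :: real assume "y \<in> {0<..}"
    have "eventually (\<lambda>x. y \<le> passage_time m x) (at_left 1)"
      using passage_time_at_left_1[OF assms] by (simp add: filterlim_at_top)
    moreover have "eventually (\<lambda>x. x \<in> {m<..<1}) (at_left (1::real))"
      using assms by (rule eventually_at_left_real)
    ultimately have "eventually (\<lambda>x. y \<le> passage_time m x \<and> x \<in> {m<..<1}) (at_left 1)"
      by eventually_elim auto
    then obtain s2 where s2: "y \<le> passage_time m s2" "m < s2" "s2 < 1"
      by (auto dest: eventually_happens simp: trivial_limit_at_left_real)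
    then obtain s where s: "m \<le> s" "s \<le> s2" "passage_time m s = y"
      using IVT'[of "passage_time m" m y s2] continuous_on_passage_time[of s2 m] \<open>y \<in> {0<..}\<close>
      by (auto simp: passage_time_def)
    moreover have "s \<noteq> m" using s \<open>y \<in> {0<..}\<close> by (auto simp: passage_time_def)
    ultimately show "y \<in> passage_time m ` {m<..<1}" using s2 by force
  qed
qed

lemma inv_into_passage_time:
  assumes "m < 1" "0 < y"
  shows "inv_into {m<..<1} (passage_time m) y \<in> {m<..<1}"
    and "passage_time m (inv_into {m<..<1} (passage_time m) y) = y"
proof -
  have "y \<in> passage_time m ` {m<..<1}" using assms passage_time_image by auto
  thus "inv_into {m<..<1} (passage_time m) y \<in> {m<..<1}"
    and "passage_time m (inv_into {m<..<1} (passage_time m) y) = y"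
    by (rule inv_into_into, rule f_inv_into_f)
qed

lemma inverse_passage_time_has_real_derivative:
  assumes "m < 1" "0 < y"
  defines "G \<equiv> inv_into {m<..<1} (passage_time m)"
  shows "(G has_real_derivative c (G y)) (at y)"
proof -
  have inj: "inj_on (passage_time m) {m<..<1}"
    by (rule inj_on_subset[OF strict_mono_on_imp_inj_on[OF strict_mono_on_passage_time]]) auto
  have G: "G z \<in> {m<..<1}" "passage_time m (G z) = z" if "0 < z" for z
    using inv_into_passage_time[OF \<open>m < 1\<close> that] by (simp_all add: G_def)
  define x where "x = G y"
  have x: "m < x" "x < 1" using G(1)[OF \<open>0 < y\<close>] by (auto simp: x_def)
  define d where "d = min (x - m) (1 - x) / 2"
  have "d \<le> (x - m) / 2" "d \<le> (1 - x) / 2" by (auto simp: d_def)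
  hence near_x: "z \<in> {m<..<1}" if "\<bar>z - x\<bar> \<le> d" for z
    using that x by (auto simp: abs_le_iff)
  have "isCont G (passage_time m x)"
  proof (rule isCont_inverse_function[where f = "passage_time m" and d = d])
    show "0 < d" using x by (simp add: d_def)
    show "G (passage_time m z) = z" if "\<bar>z - x\<bar> \<le> d" for z
      using inv_into_f_f[OF inj near_x[OF that]] by (simp add: G_def)
    show "isCont (passage_time m) z" if "\<bar>z - x\<bar> \<le> d" for z
      using near_x[OF that] by (auto intro: DERIV_isCont passage_time_has_real_derivative)
  qed
  hence "isCont G y" using G(2)[OF \<open>0 < y\<close>] by (simp add: x_def)
  have "0 < c x" using x c_pos by simp
  have "(G has_real_derivative inverse (1 / c x)) (at y)"
  proof (rule DERIV_inverse_function[where f = "passage_time m" and a = 0 and b = "y + 1"])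
    show "(passage_time m has_real_derivative 1 / c x) (at (G y))"
      using x by (simp add: x_def passage_time_has_real_derivative)
    show "passage_time m (G z) = z" if "0 < z" "z < y + 1" for z using G(2) that by simp
  qed (use \<open>0 < y\<close> \<open>isCont G y\<close> \<open>0 < c x\<close> in auto)
  thus ?thesis by (simp add: x_def)
qed

lemma inv_into_passage_time_at_top:
  assumes "m < 1"
  shows "(inv_into {m<..<1} (passage_time m) \<longlongrightarrow> 1) at_top"
proof (rule order_tendstoI)
  fix a :: real assume "a < 1"
  define e where "e = (max a m + 1) / 2"
  have e: "a < e" "m < e" "e < 1" using \<open>a < 1\<close> assms by (auto simp: e_def)
  show "eventually (\<lambda>y. a < inv_into {m<..<1} (passage_time m) y) at_top"
    using eventually_gt_at_top[of "max 0 (passage_time m e)"]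
  proof eventually_elim
    case (elim y)
    note G = inv_into_passage_time[OF assms, of y]
    have "passage_time m e < passage_time m (inv_into {m<..<1} (passage_time m) y)"
      using elim G by simp
    hence "e < inv_into {m<..<1} (passage_time m) y"
      using strict_mono_on_less[OF strict_mono_on_passage_time[of m],
          of e "inv_into {m<..<1} (passage_time m) y"] G e elim by auto
    thus ?case using e by simp
  qed
next
  fix a :: real assume "1 < a"
  show "eventually (\<lambda>y. inv_into {m<..<1} (passage_time m) y < a) at_top"
    using eventually_gt_at_top[of 0]
    by eventually_elim (use inv_into_passage_time(1)[OF assms] \<open>1 < a\<close> in force)
qed

text \<open>The solution from \<open>r0\<close> is the inverse of the passage time from \<open>r0 - 1\<close>, shifted in time.\<close>

lemma solution_exists:
  assumes "r0 < 1"
  shows "\<exists>R. R 0 = r0 \<and> (R \<longlongrightarrow> 1) at_top \<and>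
    (\<forall>t\<ge>0. r0 \<le> R t \<and> R t < 1 \<and> (R has_real_derivative c (R t)) (at t))"
proof -
  define m where "m = r0 - 1"
  define G where "G = inv_into {m<..<1} (passage_time m)"
  have m: "m < r0" "m < 1" using assms by (auto simp: m_def)
  define t0 where "t0 = passage_time m r0"
  have "0 < t0" using m assms by (simp add: t0_def passage_time_pos)
  define R where "R t = G (t0 + t)" for t
  have R: "R t \<in> {m<..<1}" "passage_time m (R t) = t0 + t" if "0 \<le> t" for t
    using inv_into_passage_time[OF \<open>m < 1\<close>, of "t0 + t"] \<open>0 < t0\<close> that
    by (simp_all add: R_def G_def)
  have "R 0 = r0"
    using R[of 0] m assms strict_mono_on_eqD[OF strict_mono_on_passage_time[of m], of r0 "R 0"]
    by (auto simp: t0_def)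
  moreover have "(R \<longlongrightarrow> 1) at_top"
    unfolding R_def[abs_def] G_def
    by (rule filterlim_compose[OF inv_into_passage_time_at_top[OF \<open>m < 1\<close>]])
       (rule filterlim_tendsto_add_at_top[OF tendsto_const filterlim_ident])
  moreover have "r0 \<le> R t" if "0 \<le> t" for t
    using R[OF that] that m assms strict_mono_on_less[OF strict_mono_on_passage_time[of m], of "R t" r0]
    by (auto simp: t0_def)
  moreover have "(R has_real_derivative c (R t)) (at t)" if "0 \<le> t" for t
  proof -
    have "((\<lambda>t. G (t0 + t)) has_real_derivative c (G (t0 + t)) * 1) (at t)"
      using \<open>0 < t0\<close> that m unfolding G_def
      by (intro DERIV_chain2[OF inverse_passage_time_has_real_derivative] derivative_eq_intros) auto
    thus ?thesis by (simp add: R_def[abs_def])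
  qed
  ultimately show ?thesis using R by (intro exI[of _ R]) auto
qed

lemma passage_time_minus_time_constant:
  assumes "convex I"
    and u: "\<And>t. t \<in> I \<Longrightarrow> m < u t \<and> u t < 1 \<and> (u has_real_derivative c (u t)) (at t within I)"
  shows "\<exists>K. \<forall>t\<in>I. passage_time m (u t) - t = K"
proof (rule has_field_derivative_zero_constant[OF assms(1)])
  fix t assume t: "t \<in> I"
  have "((\<lambda>t. passage_time m (u t) - t) has_real_derivative 1 / c (u t) * c (u t) - 1) (at t within I)"
    using u[OF t] by (intro DERIV_diff DERIV_ident DERIV_chain2[OF passage_time_has_real_derivative]) auto
  moreover have "1 / c (u t) * c (u t) - 1 = 0" using c_pos[of "u t"] u[OF t] by simp
  ultimately show "((\<lambda>t. passage_time m (u t) - t) has_real_derivative 0) (at t within I)" by simp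
qed


text \<open>Along a solution \<open>passage_time m (u t) = t + K\<close> stays bounded, so \<open>u\<close> stays away from 1.\<close>

lemma solution_below_1_at_endpoints:
  assumes "p < q"
    and deriv: "\<And>t. t \<in> {p..q} \<Longrightarrow> (u has_real_derivative c (u t)) (at t within {p..q})"
    and below: "\<And>t. t \<in> {p<..<q} \<Longrightarrow> u t < 1"
  shows "u p < 1 \<and> u q < 1"
proof -
  have cont: "continuous_on {p..q} u" by (rule DERIV_continuous_on[OF deriv])
  obtain m where m: "\<And>t. t \<in> {p..q} \<Longrightarrow> m < u t"
    using continuous_on_compact_strict_lower_bound[OF compact_Icc cont] by blast
  have "m < 1" using below[of "(p + q) / 2"] m[of "(p + q) / 2"] \<open>p < q\<close> by auto
  have "\<exists>K. \<forall>t\<in>{p<..<q}. passage_time m (u t) - t = K"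
  proof (rule passage_time_minus_time_constant)
    fix t assume t: "t \<in> {p<..<q}"
    have "(u has_real_derivative c (u t)) (at t within {p<..<q})"
      by (rule DERIV_subset[OF deriv]) (use t in auto)
    thus "m < u t \<and> u t < 1 \<and> (u has_real_derivative c (u t)) (at t within {p<..<q})"
      using m[of t] below[OF t] t by auto
  qed simp
  then obtain K where "\<forall>t\<in>{p<..<q}. passage_time m (u t) - t = K" by blast
  hence K: "passage_time m (u t) = t + K" if "t \<in> {p<..<q}" for t using that by force
  have "eventually (\<lambda>s. q + K < passage_time m s) (at_left 1)"
    using passage_time_at_left_1[OF \<open>m < 1\<close>] by (simp add: filterlim_at_top_dense)
  moreover have "eventually (\<lambda>s. s \<in> {m<..<1}) (at_left (1::real))"
    using \<open>m < 1\<close> by (rule eventually_at_left_real)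
  ultimately have "eventually (\<lambda>s. q + K < passage_time m s \<and> s \<in> {m<..<1}) (at_left 1)"
    by eventually_elim auto
  then obtain b where b: "q + K < passage_time m b" "m < b" "b < 1"
    by (auto dest: eventually_happens simp: trivial_limit_at_left_real)
  have "u t \<le> b" if "t \<in> {p<..<q}" for t
  proof -
    have "passage_time m (u t) < passage_time m b" using K[OF that] b that by auto
    thus "u t \<le> b"
      using strict_mono_on_less[OF strict_mono_on_passage_time[of m], of "u t" b]
        m[of t] below[OF that] b that by auto
  qed
  hence "u t \<le> b" if "t \<in> {p..q}" for t
    using continuous_le_on_closure[of "{p<..<q}" u t b] cont that \<open>p < q\<close> by auto
  from this[of p] this[of q] show ?thesis using b \<open>p < q\<close> by simp
qed

lemma solution_below_1_iff:
  assumes "p \<le> q"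
    and deriv: "\<And>t. t \<in> {p..q} \<Longrightarrow> (u has_real_derivative c (u t)) (at t within {p..q})"
  shows "u p < 1 \<longleftrightarrow> u q < 1"
proof -
  have cont: "continuous_on {p..q} u" by (rule DERIV_continuous_on[OF deriv])
  define Z where "Z = {t\<in>{p..q}. 1 \<le> u t}"
  have "compact Z" unfolding Z_def by (rule compact_Icc_superlevel_set[OF cont])
  have below_1_between: "u r < 1 \<and> u s < 1"
    if "p \<le> r" "r < s" "s \<le> q" "\<And>t. t \<in> {r<..<s} \<Longrightarrow> u t < 1" for r s
  proof (rule solution_below_1_at_endpoints[OF \<open>r < s\<close>])
    show "(u has_real_derivative c (u t)) (at t within {r..s})" if "t \<in> {r..s}" for t
      using that \<open>p \<le> r\<close> \<open>s \<le> q\<close> by (intro DERIV_subset[OF deriv]) auto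
  qed (use that in auto)
  show ?thesis
  proof
    assume "u p < 1"
    show "u q < 1"
    proof (rule ccontr)
      assume "\<not> u q < 1"
      hence "Z \<noteq> {}" using \<open>p \<le> q\<close> by (auto simp: Z_def)
      then obtain r where r: "r \<in> Z" "\<And>t. t \<in> Z \<Longrightarrow> r \<le> t"
        using compact_attains_inf[OF \<open>compact Z\<close>] by blast
      have "p < r" using r(1) \<open>u p < 1\<close> by (auto simp: Z_def less_eq_real_def)
      moreover have "u t < 1" if "t \<in> {p<..<r}" for t
      proof (rule ccontr)
        assume "\<not> u t < 1"
        with that r(1) have "t \<in> Z" by (auto simp: Z_def)
        with r(2) that show False by force
      qed
      ultimately have "u r < 1" using below_1_between[of p r] r(1) by (auto simp: Z_def)
      thus False using r(1) by (simp add: Z_def)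
    qed
  next
    assume "u q < 1"
    show "u p < 1"
    proof (rule ccontr)
      assume "\<not> u p < 1"
      hence "Z \<noteq> {}" using \<open>p \<le> q\<close> by (auto simp: Z_def)
      then obtain r where r: "r \<in> Z" "\<And>t. t \<in> Z \<Longrightarrow> t \<le> r"
        using compact_attains_sup[OF \<open>compact Z\<close>] by blast
      have "r < q" using r(1) \<open>u q < 1\<close> by (auto simp: Z_def less_eq_real_def)
      moreover have "u t < 1" if "t \<in> {r<..<q}" for t
      proof (rule ccontr)
        assume "\<not> u t < 1"
        with that r(1) have "t \<in> Z" by (auto simp: Z_def)
        with r(2) that show False by force
      qed
      ultimately have "u r < 1" using below_1_between[of r q] r(1) by (auto simp: Z_def)
      thus False using r(1) by (simp add: Z_def)
    qed
  qed
qed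

lemma solutions_below_1_unique:
  assumes du: "\<And>t. 0 \<le> t \<Longrightarrow> (u has_real_derivative c (u t)) (at t within {0..})"
    and dv: "\<And>t. 0 \<le> t \<Longrightarrow> (v has_real_derivative c (v t)) (at t within {0..})"
    and below: "\<And>t. 0 \<le> t \<Longrightarrow> u t < 1 \<and> v t < 1"
    and "u 0 = v 0" "0 \<le> t1"
  shows "u t1 = v t1"
proof -
  have du': "(u has_real_derivative c (u t)) (at t within {0..t1})"
    and dv': "(v has_real_derivative c (v t)) (at t within {0..t1})" if "t \<in> {0..t1}" for t
    using that by (auto intro: DERIV_subset[OF du] DERIV_subset[OF dv])
  obtain m1 where m1: "\<forall>t\<in>{0..t1}. m1 < u t"
    using continuous_on_compact_strict_lower_bound[OF compact_Icc DERIV_continuous_on[OF du']] by blast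
  obtain m2 where m2: "\<forall>t\<in>{0..t1}. m2 < v t"
    using continuous_on_compact_strict_lower_bound[OF compact_Icc DERIV_continuous_on[OF dv']] by blast
  define m where "m = min m1 m2"
  have m: "m < u t" "m < v t" if "t \<in> {0..t1}" for t
    using m1 m2 that by (auto simp: m_def min_less_iff_disj)
  have "\<exists>K. \<forall>t\<in>{0..t1}. passage_time m (u t) - t = K"
    using du' m below by (intro passage_time_minus_time_constant) auto
  then obtain K1 where K1: "\<forall>t\<in>{0..t1}. passage_time m (u t) - t = K1" by blast
  have "\<exists>K. \<forall>t\<in>{0..t1}. passage_time m (v t) - t = K"
    using dv' m below by (intro passage_time_minus_time_constant) auto
  then obtain K2 where K2: "\<forall>t\<in>{0..t1}. passage_time m (v t) - t = K2" by blast
  have "passage_time m (u t1) = passage_time m (v t1)"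
    using K1[rule_format, of 0] K1[rule_format, of t1] K2[rule_format, of 0] K2[rule_format, of t1]
      \<open>0 \<le> t1\<close> \<open>u 0 = v 0\<close> by auto
  thus ?thesis
    using strict_mono_on_eqD[OF strict_mono_on_passage_time, of m "u t1" "v t1"]
      m[of t1] below[of t1] \<open>0 \<le> t1\<close> by force
qed

end

section \<open>The equation \<open>S' = A_l(S)\<close>\<close>

text \<open>
  A solution \<open>S \<ge> 0\<close> also solves \<open>u' = A_l(max u 0)\<close>, and \<open>2 - S\<close> solves \<open>u' = - A_l(2 - u)\<close>;
  both drifts are positive below 1, so the first handles data below 1, the second data above 1.
\<close>

lemma below_equilibrium_A_l_max_0:
  assumes "0 < l"
  shows "below_equilibrium (\<lambda>y. A_l l (max y 0))"
proof
  show "continuous_on {..<1} (\<lambda>y. A_l l (max y 0))"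
    by (rule continuous_on_compose2[OF continuous_on_A_l[OF assms]]) (auto intro!: continuous_intros)
  show "0 < A_l l (max y 0)" if "y < 1" for y using A_l_pos[OF assms] that by simp
  obtain L where "0 < L" and "eventually (\<lambda>y. \<bar>A_l l y\<bar> \<le> L * \<bar>y - 1\<bar>) (at 1)"
    using A_l_linear_bound_at_1 by blast
  then obtain d where "0 < d" and near_1: "\<And>y. y \<noteq> 1 \<Longrightarrow> dist y 1 < d \<Longrightarrow> \<bar>A_l l y\<bar> \<le> L * \<bar>y - 1\<bar>"
    by (auto simp: eventually_at)
  have "eventually (\<lambda>y. y \<in> {max 0 (1 - d)<..<1}) (at_left (1::real))"
    using \<open>0 < d\<close> by (intro eventually_at_left_real) auto
  hence "eventually (\<lambda>y. A_l l (max y 0) \<le> L * (1 - y)) (at_left 1)"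
  proof eventually_elim
    case (elim y)
    hence "max y 0 = y" "y \<noteq> 1" "dist y 1 < d" by (auto simp: dist_real_def)
    with near_1[of y] elim show ?case by auto
  qed
  thus "\<exists>L>0. eventually (\<lambda>y. A_l l (max y 0) \<le> L * (1 - y)) (at_left 1)"
    using \<open>0 < L\<close> by blast
qed

lemma below_equilibrium_A_l_reflected:
  assumes "0 < l"
  shows "below_equilibrium (\<lambda>y. - A_l l (2 - y))"
proof
  show "continuous_on {..<1} (\<lambda>y. - A_l l (2 - y))"
    by (intro continuous_intros continuous_on_compose2[OF continuous_on_A_l[OF assms]])
       (auto intro!: continuous_intros)
  show "0 < - A_l l (2 - y)" if "y < 1" for y using A_l_neg[OF assms] that by simp
  obtain L where "0 < L" and "eventually (\<lambda>y. \<bar>A_l l y\<bar> \<le> L * \<bar>y - 1\<bar>) (at 1)"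
    using A_l_linear_bound_at_1 by blast
  then obtain d where "0 < d" and near_1: "\<And>y. y \<noteq> 1 \<Longrightarrow> dist y 1 < d \<Longrightarrow> \<bar>A_l l y\<bar> \<le> L * \<bar>y - 1\<bar>"
    by (auto simp: eventually_at)
  have "eventually (\<lambda>y. y \<in> {1 - d<..<1}) (at_left (1::real))"
    using \<open>0 < d\<close> by (intro eventually_at_left_real) auto
  hence "eventually (\<lambda>y. - A_l l (2 - y) \<le> L * (1 - y)) (at_left 1)"
  proof eventually_elim
    case (elim y)
    hence "2 - y \<noteq> 1" "dist (2 - y) 1 < d" "\<bar>2 - y - 1\<bar> = 1 - y" by (auto simp: dist_real_def)
    with near_1[of "2 - y"] show ?case by auto
  qed
  thus "\<exists>L>0. eventually (\<lambda>y. - A_l l (2 - y) \<le> L * (1 - y)) (at_left 1)"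
    using \<open>0 < L\<close> by blast
qed

lemma pos_solution_derivative:
  assumes "is_pos_solution l S0 S" "I \<subseteq> {0..}" "t \<in> I"
  shows "(S has_real_derivative A_l l (max (S t) 0)) (at t within I)"
    and "((\<lambda>t. 2 - S t) has_real_derivative - A_l l (2 - (2 - S t))) (at t within I)"
proof -
  have "0 \<le> S t" "(S has_real_derivative A_l l (S t)) (at t within I)"
    using assms by (auto simp: is_pos_solution_def intro: DERIV_subset)
  thus "(S has_real_derivative A_l l (max (S t) 0)) (at t within I)"
    and "((\<lambda>t. 2 - S t) has_real_derivative - A_l l (2 - (2 - S t))) (at t within I)"
    by (auto intro!: derivative_eq_intros)
qed

lemma pos_solution_side_of_1:
  assumes "0 < l" "is_pos_solution l S0 S" "0 \<le> t"
  shows "S t < 1 \<longleftrightarrow> S0 < 1" and "1 < S t \<longleftrightarrow> 1 < S0"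
proof -
  interpret lower: below_equilibrium "\<lambda>y. A_l l (max y 0)"
    by (rule below_equilibrium_A_l_max_0[OF assms(1)])
  interpret upper: below_equilibrium "\<lambda>y. - A_l l (2 - y)"
    by (rule below_equilibrium_A_l_reflected[OF assms(1)])
  have "S 0 = S0" using assms(2) by (simp add: is_pos_solution_def)
  thus "S t < 1 \<longleftrightarrow> S0 < 1"
    using lower.solution_below_1_iff[of 0 t S] pos_solution_derivative(1)[OF assms(2)] assms(3) by auto
  have "2 - S t < 1 \<longleftrightarrow> 2 - S0 < 1"
    using upper.solution_below_1_iff[of 0 t "\<lambda>t. 2 - S t"] pos_solution_derivative(2)[OF assms(2)]
      assms(3) \<open>S 0 = S0\<close> by auto
  thus "1 < S t \<longleftrightarrow> 1 < S0" by linarith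
qed

lemma pos_solution_unique:
  assumes "0 < l" "is_pos_solution l S0 S1" "is_pos_solution l S0 S2" "0 \<le> t"
  shows "S1 t = S2 t"
proof -
  interpret lower: below_equilibrium "\<lambda>y. A_l l (max y 0)"
    by (rule below_equilibrium_A_l_max_0[OF assms(1)])
  interpret upper: below_equilibrium "\<lambda>y. - A_l l (2 - y)"
    by (rule below_equilibrium_A_l_reflected[OF assms(1)])
  note side = pos_solution_side_of_1[OF assms(1,2)] pos_solution_side_of_1[OF assms(1,3)]
  note deriv = pos_solution_derivative[OF assms(2)] pos_solution_derivative[OF assms(3)]
  have "S1 0 = S2 0" using assms(2,3) by (simp add: is_pos_solution_def)
  consider "S0 < 1" | "S0 = 1" | "1 < S0" by linarith
  thus ?thesis
  proof cases
    case 1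
    show ?thesis
      by (rule lower.solutions_below_1_unique[of S1 S2]) (use deriv side 1 \<open>S1 0 = S2 0\<close> assms(4) in auto)
  next
    case 2
    thus ?thesis using side assms(4) by (metis linorder_neqE_linordered_idom less_irrefl)
  next
    case 3
    have "2 - S1 t = 2 - S2 t"
      by (rule upper.solutions_below_1_unique[of "\<lambda>t. 2 - S1 t" "\<lambda>t. 2 - S2 t"])
         (use deriv side 3 \<open>S1 0 = S2 0\<close> assms(4) in auto)
    thus ?thesis by simp
  qed
qed

lemma pos_solution_exists_below_1:
  assumes "0 < l" "0 \<le> S0" "S0 < 1"
  shows "\<exists>S. is_pos_solution l S0 S \<and> (S \<longlongrightarrow> 1) at_top \<and> (\<forall>t\<ge>0. 0 \<le> S t \<and> S t \<le> max S0 1)"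
proof -
  interpret lower: below_equilibrium "\<lambda>y. A_l l (max y 0)"
    by (rule below_equilibrium_A_l_max_0[OF assms(1)])
  obtain R where R: "R 0 = S0" "(R \<longlongrightarrow> 1) at_top"
    "\<And>t. 0 \<le> t \<Longrightarrow> S0 \<le> R t \<and> R t < 1 \<and> (R has_real_derivative A_l l (max (R t) 0)) (at t)"
    using lower.solution_exists[OF assms(3)] by blast
  have "0 \<le> R t \<and> (R has_real_derivative A_l l (R t)) (at t within {0..})" if "0 \<le> t" for t
  proof -
    have "max (R t) 0 = R t" using R(3)[OF that] assms(2) by simp
    thus ?thesis using R(3)[OF that] assms(2) by (auto intro: has_field_derivative_at_within)
  qed
  hence "is_pos_solution l S0 R" using R(1) by (simp add: is_pos_solution_def)
  moreover have "0 \<le> R t \<and> R t \<le> max S0 1" if "0 \<le> t" for t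
    using R(3)[OF that] assms(2) by auto
  ultimately show ?thesis using R(2) by (intro exI[of _ R]) simp
qed

lemma pos_solution_exists_above_1:
  assumes "0 < l" "1 < S0"
  shows "\<exists>S. is_pos_solution l S0 S \<and> (S \<longlongrightarrow> 1) at_top \<and> (\<forall>t\<ge>0. 0 \<le> S t \<and> S t \<le> max S0 1)"
proof -
  interpret upper: below_equilibrium "\<lambda>y. - A_l l (2 - y)"
    by (rule below_equilibrium_A_l_reflected[OF assms(1)])
  obtain R where R: "R 0 = 2 - S0" "(R \<longlongrightarrow> 1) at_top"
    "\<And>t. 0 \<le> t \<Longrightarrow> 2 - S0 \<le> R t \<and> R t < 1 \<and> (R has_real_derivative - A_l l (2 - R t)) (at t)"
    using upper.solution_exists[of "2 - S0"] assms(2) by auto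
  have "0 \<le> 2 - R t \<and> ((\<lambda>t. 2 - R t) has_real_derivative A_l l (2 - R t)) (at t within {0..})"
    if "0 \<le> t" for t
  proof -
    have "((\<lambda>t. 2 - R t) has_real_derivative 0 - - A_l l (2 - R t)) (at t)"
      using R(3)[OF that] by (intro DERIV_diff DERIV_const) auto
    thus ?thesis using R(3)[OF that] by (simp add: has_field_derivative_at_within)
  qed
  hence "is_pos_solution l S0 (\<lambda>t. 2 - R t)" using R(1) by (simp add: is_pos_solution_def)
  moreover have "((\<lambda>t. 2 - R t) \<longlongrightarrow> 1) at_top"
    using tendsto_diff[OF tendsto_const[of 2] R(2)] by simp
  moreover have "0 \<le> 2 - R t \<and> 2 - R t \<le> max S0 1" if "0 \<le> t" for t
    using R(3)[OF that] assms(2) by auto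
  ultimately show ?thesis by (intro exI[of _ "\<lambda>t. 2 - R t"]) simp
qed

lemma pos_solution_exists:
  assumes "0 < l" "0 \<le> S0"
  shows "\<exists>S. is_pos_solution l S0 S \<and> (S \<longlongrightarrow> 1) at_top \<and> (\<forall>t\<ge>0. 0 \<le> S t \<and> S t \<le> max S0 1)"
proof (cases S0 "1::real" rule: linorder_cases)
  case equal
  hence "is_pos_solution l S0 (\<lambda>t. 1)"
    unfolding is_pos_solution_def using A_l_1[of l] by (auto intro: DERIV_const)
  thus ?thesis using equal by (intro exI[of _ "\<lambda>t. 1"]) auto
qed (use assms pos_solution_exists_below_1 pos_solution_exists_above_1 in auto)

theorem theorem4p1:
  fixes l S0 :: real
  assumes "l > 0" and "S0 \<ge> 0"
  shows "\<exists>S. is_pos_solution l S0 S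
     \<and> (\<forall>S'. is_pos_solution l S0 S' \<longrightarrow> (\<forall>t\<ge>0. S' t = S t))
     \<and> bounded (S ` {0..})
     \<and> continuous_on {0..} (\<lambda>t. A_l l (S t))
     \<and> (S \<longlongrightarrow> 1) at_top
     \<and> (\<forall>t\<ge>0. 0 \<le> S t \<and> S t \<le> max S0 1)"
proof -
  obtain S where S: "is_pos_solution l S0 S" "(S \<longlongrightarrow> 1) at_top"
    and range: "\<forall>t\<ge>0. 0 \<le> S t \<and> S t \<le> max S0 1"
    using pos_solution_exists[OF assms] by blast
  have unique: "\<forall>S'. is_pos_solution l S0 S' \<longrightarrow> (\<forall>t\<ge>0. S' t = S t)"
    using pos_solution_unique[OF assms(1) _ S(1)] by blast
  have "S ` {0..} \<subseteq> {0..max S0 1}" by (intro image_subsetI) (use range in simp)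
  hence bounded: "bounded (S ` {0..})" by (rule bounded_subset[OF bounded_closed_interval])
  have "continuous_on {0..} S"
    by (rule DERIV_continuous_on[where D = "\<lambda>t. A_l l (S t)"])
       (use S(1) in \<open>simp add: is_pos_solution_def\<close>)
  hence "continuous_on {0..} (\<lambda>t. A_l l (S t))"
    by (rule continuous_on_compose2[OF continuous_on_A_l[OF assms(1)]], intro image_subsetI)
       (use range in simp)
  with S unique bounded range show ?thesis by blast
qed

end
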